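(* Let $m\ge1$ and $T_{m,p}=\frac{1}{p+1}\binom{2p}{p}m^{p+1}$. Then $$\mathbf N^{\mathcal T}_m(z)=\frac{1}{2z}\sum_{p\ge0}T_{m,p}\left(z^{p+1}+\sqrt{1-4mz+2z^{p+1}+z^{2p+2}}-\sqrt{1-4mz}\right)$$ and $$\mathbf E^{\mathcal T}_m(z)=\frac{3}{2z}\sum_{p\ge0}\frac{pT_{m,p}}{p+2}\left(z^{p+1}+\sqrt{1-4mz+2z^{p+1}+z^{2p+2}}-\sqrt{1-4mz}\right).$$
   Context: An $m$-labeled unranked tree is a non-empty finite rooted tree with node labels in $\{1,\dots,m\}$ and linearly ordered children (any finite number); its size is its number of edges; $\mathcal T_{m,n}$ is the set of such trees of size $n$ (so $|\mathcal T_{m,p}|=T_{m,p}$). For such a tree $t$, $\|\mathrm{dag}(t)\|$ is the number of distinct subtrees of $t$ (subtree = a node with all its descendants, compared as ordered labeled trees), i.e. the number of nodes of its minimal dag, and $|\mathrm{dag}(t)|$, the number of edges of the minimal dag, is the sum over distinct subtrees of $t$ of the number of children of their root. Define $\mathbf N^{\mathcal T}_m(z)=\sum_{n\ge0}\big(\sum_{t\in\mathcal T_{m,n}}\|\mathrm{dag}(t)\|\big)z^n$ and $\mathbf E^{\mathcal T}_m(z)=\sum_{n\ge0}\big(\sum_{t\in\mathcal T_{m,n}}|\mathrm{dag}(t)|\big)z^n$. *)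

theory Defs
  imports "HOL-Analysis.Analysis"
begin

datatype utree = Node nat "utree list"

text \<open>Size = number of edges.\<close>
fun tsize :: "utree \<Rightarrow> nat" where
  "tsize (Node a ts) = length ts + sum_list (map tsize ts)"

fun labelled_in :: "nat \<Rightarrow> utree \<Rightarrow> bool" where
  "labelled_in m (Node a ts) = (1 \<le> a \<and> a \<le> m \<and> (\<forall>t\<in>set ts. labelled_in m t))"

fun subtrees :: "utree \<Rightarrow> utree set" where
  "subtrees (Node a ts) = insert (Node a ts) (\<Union>t\<in>set ts. subtrees t)"

fun num_children :: "utree \<Rightarrow> nat" where
  "num_children (Node a ts) = length ts"

definition trees :: "nat \<Rightarrow> nat \<Rightarrow> utree set" where
  "trees m n = {t. labelled_in m t \<and> tsize t = n}"

text \<open>||dag(t)||: number of nodes of the minimal dag = number of distinct subtrees.\<close>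
definition dag_nodes :: "utree \<Rightarrow> nat" where
  "dag_nodes t = card (subtrees t)"

text \<open>|dag(t)|: number of edges of the minimal dag.\<close>
definition dag_edges :: "utree \<Rightarrow> nat" where
  "dag_edges t = (\<Sum>s\<in>subtrees t. num_children s)"

text \<open>Coefficients of N^T_m and E^T_m.\<close>
definition NT_coeff :: "nat \<Rightarrow> nat \<Rightarrow> nat" where
  "NT_coeff m n = (\<Sum>t\<in>trees m n. dag_nodes t)"

definition ET_coeff :: "nat \<Rightarrow> nat \<Rightarrow> nat" where
  "ET_coeff m n = (\<Sum>t\<in>trees m n. dag_edges t)"

definition Tmp :: "nat \<Rightarrow> nat \<Rightarrow> complex" where
  "Tmp m p = of_real (1 / real (p + 1) * real ((2*p) choose p) * real m ^ (p + 1))"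

definition bracket :: "nat \<Rightarrow> nat \<Rightarrow> complex \<Rightarrow> complex" where
  "bracket m p z = z ^ (p + 1)
     + csqrt (1 - 4 * of_nat m * z + 2 * z ^ (p + 1) + z ^ (2 * p + 2))
     - csqrt (1 - 4 * of_nat m * z)"

end

theory Submission
  imports Defs "HOL-Analysis.FPS_Convergence"
begin

text \<open>Exchanging the sum over the trees t of size n with the sum over their distinct subtrees s
  turns the n-th coefficient of N (resp. E) into the sum over all s of the number of trees of size n
  containing s (weighted by the number of children of s). The trees containing s are those that do
  not avoid s. All trees, and the trees avoiding s, satisfy F = 1 + z C F and C + D = m F for the
  generating functions F of their forests and C of themselves, with D = 0 resp. D = z^|s|. So
  1 - 2 z T and 1 - z^(|s|+1) - 2 z A_s are the two square roots in the bracket, and the trees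
  containing s have generating function T - A_s = bracket / (2 z), which depends on s only through
  p = |s|. The coefficients of the first square root satisfy a linear recurrence, giving T_{m,p}
  trees of size p, and these have 3 p T_{m,p} / (p + 2) children in total. For |z| < 1/(16 m)
  everything converges absolutely, which justifies the exchange.\<close>

lemma square_root_of_tree_equation:
  fixes x c f d M :: "'a :: comm_ring_1"
  assumes "f = 1 + x * (c * f)" "c + d = M * f"
  shows "(1 - x * d - 2 * x * c)\<^sup>2 = 1 - 4 * M * x + 2 * x * d + (x * d)\<^sup>2"
proof -
  have "(1 - x * d - 2 * x * c)\<^sup>2 - (1 - 4 * M * x + 2 * x * d + (x * d)\<^sup>2) =
        4 * x * (x * c * (c + d) - (c + d) + M)"
    by (simp add: power2_eq_square algebra_simps)
  also have "\<dots> = 4 * x * M * (1 + x * (c * f) - f)"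
    by (simp add: assms(2) algebra_simps)
  also have "\<dots> = 0"
    using assms(1) by simp
  finally show ?thesis by simp
qed

lemma forest_length_identity:
  fixes x c f l M :: "'a :: idom"
  assumes "c = M * f" "f = 1 + x * (c * f)" "l = x * (c * (f + l))"
  shows "x * (M * (M * l)) = c - M - x * (M * c)"
  using assms by algebra

lemma fps_square_linear_coeff_recurrence:
  fixes S :: "'a :: comm_ring_1 fps"
  assumes "S\<^sup>2 = 1 - fps_const a * fps_X"
  shows "2 * of_nat (Suc n) * fps_nth S (Suc n) = a * (2 * of_nat n - 1) * fps_nth S n"
proof -
  have "fps_const 2 * (S * fps_deriv S) = - fps_const a"
    using arg_cong[OF assms, of fps_deriv]
    by (simp add: power2_eq_square algebra_simps fps_numeral_fps_const)
  then have "(1 - fps_const a * fps_X) * (fps_const 2 * fps_deriv S) = - fps_const a * S"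
    unfolding assms[symmetric] by (simp add: power2_eq_square algebra_simps)
  then have "fps_nth ((1 - fps_const a * fps_X) * (fps_const 2 * fps_deriv S)) n =
             fps_nth (- fps_const a * S) n"
    by (rule arg_cong)
  then show ?thesis
    by (cases n) (simp_all add: algebra_simps)
qed

lemma central_binomial_Suc:
  "Suc n * ((2 * Suc n) choose Suc n) = 2 * (2 * n + 1) * ((2 * n) choose n)"
proof -
  have "Suc n * ((2 * Suc n) choose Suc n) = Suc (2 * n + 1) * ((2 * n + 1) choose n)"
    using Suc_times_binomial_eq[of "2 * n + 1" n] by (simp only: mult.commute) simp
  also have "\<dots> = 2 * (Suc n * ((2 * n + 1) choose n))"
    by simp
  also have "Suc n * ((2 * n + 1) choose n) = (2 * n + 1) * ((2 * n) choose n)"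
    using Suc_times_binomial_eq[of "2 * n" n] binomial_symmetric[of "Suc n" "Suc (2 * n)"]
    by (simp add: mult.commute)
  finally show ?thesis by simp
qed

lemma Suc_square_le_four_power: "(Suc n)\<^sup>2 \<le> 4 ^ n"
proof (induction n)
  case (Suc n)
  have "(Suc (Suc n))\<^sup>2 \<le> 4 * (Suc n)\<^sup>2"
    by (simp add: power2_eq_square)
  also have "\<dots> \<le> 4 * 4 ^ n"
    using Suc by simp
  finally show ?case by simp
qed simp

lemma sum_set_le_sum_list: "(\<Sum>x\<in>set xs. f x) \<le> (\<Sum>x\<leftarrow>xs. f x :: nat)"
  by (induction xs) (auto simp: sum.insert_if)

lemma norm_less_fps_conv_radius_geometric:
  fixes f :: "complex fps"
  assumes bound: "\<And>n. norm (fps_nth f n) \<le> C * q ^ n" and q: "q \<ge> 0" and "q * norm z < 1"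
  shows "norm z < fps_conv_radius f"
proof -
  define r where "r = norm z + (1 - q * norm z) / (2 * q + 2)"
  have r: "norm z < r" "q * r < 1"
    using assms(3) q mult_left_mono[OF less_imp_le[OF assms(3)] q] by (auto simp: r_def field_simps)
  have r0: "0 \<le> r"
    using r(1) norm_ge_zero[of z] by linarith
  have "summable (\<lambda>n. fps_nth f n * complex_of_real r ^ n)"
  proof (rule summable_comparison_test')
    show "summable (\<lambda>n. C * (q * r) ^ n)"
      using r r0 q by (intro summable_mult summable_geometric) simp
    show "norm (fps_nth f n * complex_of_real r ^ n) \<le> C * (q * r) ^ n" for n
      using mult_right_mono[OF bound[of n], of "r ^ n"] r0
      by (simp add: norm_mult norm_power power_mult_distrib mult.assoc)
  qed
  then have "ereal r \<le> fps_conv_radius f"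
    using conv_radius_geI[of _ "complex_of_real r"] r r0 by (simp add: fps_conv_radius_def)
  moreover have "ereal (norm z) < ereal r"
    using r(1) by simp
  ultimately show ?thesis
    by (metis less_le_trans)
qed

lemma norm_eval_fps_le_geometric:
  fixes f :: "complex fps"
  assumes bound: "\<And>n. norm (fps_nth f n) \<le> C * q ^ n" and q: "q \<ge> 0" and "q * norm z < 1"
  shows "norm (eval_fps f z) \<le> C / (1 - q * norm z)"
proof -
  have terms: "norm (fps_nth f n * z ^ n) \<le> C * (q * norm z) ^ n" for n
    using mult_right_mono[OF bound[of n], of "norm z ^ n"]
    by (simp add: norm_mult norm_power power_mult_distrib mult.assoc)
  have "norm (q * norm z) < 1"
    using assms(3) q by simp
  from sums_mult[OF geometric_sums[OF this], of C]
  have geo: "(\<lambda>n. C * (q * norm z) ^ n) sums (C / (1 - q * norm z))"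
    by (simp add: divide_inverse)
  have summable: "summable (\<lambda>n. norm (fps_nth f n * z ^ n))"
    by (rule summable_comparison_test'[OF sums_summable[OF geo]]) (use terms in simp)
  have "norm (eval_fps f z) \<le> (\<Sum>n. norm (fps_nth f n * z ^ n))"
    unfolding eval_fps_def by (rule summable_norm[OF summable])
  also have "\<dots> \<le> (\<Sum>n. C * (q * norm z) ^ n)"
    by (rule suminf_le[OF terms summable sums_summable[OF geo]])
  also have "\<dots> = C / (1 - q * norm z)"
    using geo by (rule sums_unique[symmetric])
  finally show ?thesis .
qed

lemma norm_less_fps_conv_radius_add:
  "norm z < fps_conv_radius f \<Longrightarrow> norm z < fps_conv_radius g \<Longrightarrow>
   norm (z :: complex) < fps_conv_radius (f + g)"
  using fps_conv_radius_add[of f g] by (meson min_less_iff_conj less_le_trans)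

lemma norm_less_fps_conv_radius_diff:
  "norm z < fps_conv_radius f \<Longrightarrow> norm z < fps_conv_radius g \<Longrightarrow>
   norm (z :: complex) < fps_conv_radius (f - g)"
  using fps_conv_radius_diff[of f g] by (meson min_less_iff_conj less_le_trans)

lemma norm_less_fps_conv_radius_mult:
  "norm z < fps_conv_radius f \<Longrightarrow> norm z < fps_conv_radius g \<Longrightarrow>
   norm (z :: complex) < fps_conv_radius (f * g)"
  using fps_conv_radius_mult[of f g] by (meson min_less_iff_conj less_le_trans)

lemma norm_less_fps_conv_radius_power:
  "norm z < fps_conv_radius f \<Longrightarrow> norm (z :: complex) < fps_conv_radius (f ^ k)"
  using fps_conv_radius_power[of f k] by (meson less_le_trans)

lemmas norm_less_fps_conv_radius_arith =
  norm_less_fps_conv_radius_add norm_less_fps_conv_radius_diff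
  norm_less_fps_conv_radius_mult norm_less_fps_conv_radius_power

lemmas eval_fps_arith = eval_fps_add eval_fps_diff eval_fps_mult eval_fps_power

lemma csqrt_eqI:
  assumes "w\<^sup>2 = u" "norm (1 - w) < 1"
  shows "csqrt u = w"
proof (rule csqrt_unique)
  have "Re (1 - w) < 1"
    using abs_Re_le_cmod[of "1 - w"] assms(2) by linarith
  then show "0 < Re w \<or> Re w = 0 \<and> 0 \<le> Im w"
    by simp
qed (use assms(1) in simp)

lemma sums_triangular_array:
  fixes a :: "nat \<Rightarrow> nat \<Rightarrow> complex"
  assumes zero: "\<And>p n. n < p \<Longrightarrow> a p n = 0"
    and abs_summable: "summable (\<lambda>n. \<Sum>p\<le>n. norm (a p n))"
    and rows: "\<And>p. (\<lambda>n. a p n) sums b p"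
  shows "\<exists>S. (\<lambda>n. \<Sum>p\<le>n. a p n) sums S \<and> b sums S"
proof -
  define g where "g = (\<lambda>(n, p). a p n)"
  have column: "((\<lambda>p. h (a p n)) has_sum (\<Sum>p\<le>n. h (a p n))) UNIV"
    if "h 0 = 0" for h :: "complex \<Rightarrow> 'b :: {topological_comm_monoid_add, t2_space}" and n
    by (rule has_sum_finite_neutralI) (use zero that in \<open>auto simp: not_le\<close>)
  have "(\<lambda>x. norm (g x)) summable_on (UNIV \<times> UNIV)"
  proof (rule summable_on_SigmaI)
    show "((\<lambda>p. norm (g (n, p))) has_sum (\<Sum>p\<le>n. norm (a p n))) UNIV" for n
      using column[of norm n] by (simp add: g_def)
    show "(\<lambda>n. \<Sum>p\<le>n. norm (a p n)) summable_on UNIV"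
      using abs_summable by (subst summable_on_UNIV_nonneg_real_iff) (auto intro: sum_nonneg)
  qed auto
  then have g_summable: "g summable_on (UNIV \<times> UNIV)"
    using summable_on_iff_abs_summable_on_complex by blast
  have norm_summable: "summable (\<lambda>n. norm (\<Sum>p\<le>n. a p n))"
    by (rule summable_comparison_test'[OF abs_summable]) (simp add: norm_sum)
  obtain S where S: "(\<lambda>n. \<Sum>p\<le>n. a p n) sums S"
    using summable_norm_cancel[OF norm_summable] by (auto simp: summable_def)
  have "(g has_sum S) (UNIV \<times> UNIV)"
  proof (rule has_sum_SigmaI[OF _ _ g_summable])
    show "((\<lambda>p. g (n, p)) has_sum (\<Sum>p\<le>n. a p n)) UNIV" for n
      using column[of id n] by (simp add: g_def)
    show "((\<lambda>n. \<Sum>p\<le>n. a p n) has_sum S) UNIV"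
      by (rule norm_summable_imp_has_sum[OF norm_summable S])
  qed
  from has_sum_swap[THEN iffD1, OF this]
  have "((\<lambda>(p, n). a p n) has_sum S) (UNIV \<times> UNIV)"
    by (simp add: g_def case_prod_unfold)
  then have "(b has_sum S) UNIV"
  proof (rule has_sum_Sigma')
    fix p :: nat
    have "norm (a p n) \<le> (\<Sum>p\<le>n. norm (a p n))" for n
      by (cases "p \<le> n") (auto intro: member_le_sum sum_nonneg simp: zero not_le)
    then have "summable (\<lambda>n. norm (a p n))"
      by (intro summable_comparison_test'[OF abs_summable]) simp
    then show "((\<lambda>n. (\<lambda>(p, n). a p n) (p, n)) has_sum b p) UNIV"
      using norm_summable_imp_has_sum[OF _ rows[of p]] by simp
  qed
  then have "b sums S"
    by (rule has_sum_imp_sums)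
  with S show ?thesis
    by blast
qed

section \<open>Forests and their generating functions\<close>

definition forest_size :: "utree list \<Rightarrow> nat" where
  "forest_size ts = length ts + sum_list (map tsize ts)"

lemma forest_size_Nil [simp]: "forest_size [] = 0"
  and forest_size_Cons [simp]: "forest_size (t # ts) = Suc (tsize t) + forest_size ts"
  by (simp_all add: forest_size_def)

lemma tsize_Node: "tsize (Node a ts) = forest_size ts"
  by (simp add: forest_size_def)

definition trees_of_size :: "utree set \<Rightarrow> nat \<Rightarrow> utree set" where
  "trees_of_size X n = {t \<in> X. tsize t = n}"

definition forests_of_size :: "utree set \<Rightarrow> nat \<Rightarrow> utree list set" where
  "forests_of_size X n = {ts. set ts \<subseteq> X \<and> forest_size ts = n}"

lemma forests_of_size_0: "forests_of_size X 0 = {[]}"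
  by (auto simp: forests_of_size_def forest_size_def)

lemma forests_of_size_Suc:
  "forests_of_size X (Suc n) =
     (\<Union>k\<le>n. (\<lambda>(t, ts). t # ts) ` (trees_of_size X k \<times> forests_of_size X (n - k)))"
proof (intro equalityI subsetI)
  fix ts assume "ts \<in> forests_of_size X (Suc n)"
  then obtain t us where "ts = t # us" "t \<in> X" "set us \<subseteq> X" "Suc (tsize t) + forest_size us = Suc n"
    by (cases ts) (auto simp: forests_of_size_def)
  then show "ts \<in> (\<Union>k\<le>n. (\<lambda>(t, ts). t # ts) ` (trees_of_size X k \<times> forests_of_size X (n - k)))"
    by (auto simp: trees_of_size_def forests_of_size_def
        intro!: bexI[of _ "tsize t"] image_eqI[of _ _ "(t, us)"])
qed (auto simp: trees_of_size_def forests_of_size_def)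

lemma finite_forests_of_size:
  assumes "\<And>k. k < n \<Longrightarrow> finite (trees_of_size X k)"
  shows "finite (forests_of_size X n)"
  using assms
proof (induction n rule: less_induct)
  case (less n)
  show ?case
  proof (cases n)
    case 0
    then show ?thesis by (simp add: forests_of_size_0)
  next
    case (Suc n')
    have "finite (forests_of_size X (Suc n'))"
      unfolding forests_of_size_Suc using less Suc
      by (intro finite_UN_I finite_imageI finite_cartesian_product) auto
    then show ?thesis using Suc by simp
  qed
qed

lemma sum_forests_of_size_Suc:
  assumes "\<And>k. k \<le> n \<Longrightarrow> finite (trees_of_size X k)"
  shows "(\<Sum>ts\<in>forests_of_size X (Suc n). g ts) =
         (\<Sum>k\<le>n. \<Sum>t\<in>trees_of_size X k. \<Sum>ts\<in>forests_of_size X (n - k). g (t # ts))"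
proof -
  have fin: "finite (forests_of_size X j)" if "j \<le> n" for j
    using assms that by (intro finite_forests_of_size) auto
  have inj: "inj_on (\<lambda>(t, ts). t # ts) A" for A :: "(utree \<times> utree list) set"
    by (auto simp: inj_on_def)
  have "(\<Sum>ts\<in>forests_of_size X (Suc n). g ts) =
        (\<Sum>k\<le>n. \<Sum>ts\<in>(\<lambda>(t, ts). t # ts) ` (trees_of_size X k \<times> forests_of_size X (n - k)). g ts)"
    unfolding forests_of_size_Suc
    by (rule sum.UNION_disjoint) (use assms fin in \<open>auto simp: trees_of_size_def forests_of_size_def\<close>)
  also have "\<dots> = (\<Sum>k\<le>n. \<Sum>(t, ts)\<in>trees_of_size X k \<times> forests_of_size X (n - k). g (t # ts))"
    by (intro sum.cong refl, subst sum.reindex[OF inj]) (simp add: case_prod_unfold)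
  finally show ?thesis
    by (simp add: sum.cartesian_product)
qed

definition tree_gf :: "utree set \<Rightarrow> complex fps" where
  "tree_gf X = Abs_fps (\<lambda>n. of_nat (card (trees_of_size X n)))"

definition forest_gf :: "utree set \<Rightarrow> complex fps" where
  "forest_gf X = Abs_fps (\<lambda>n. of_nat (card (forests_of_size X n)))"

definition forest_length_gf :: "utree set \<Rightarrow> complex fps" where
  "forest_length_gf X = Abs_fps (\<lambda>n. of_nat (\<Sum>ts\<in>forests_of_size X n. length ts))"

lemma forest_gf_eq:
  assumes "\<And>k. finite (trees_of_size X k)"
  shows "forest_gf X = 1 + fps_X * (tree_gf X * forest_gf X)"
proof (rule fps_ext)
  fix n
  show "fps_nth (forest_gf X) n = fps_nth (1 + fps_X * (tree_gf X * forest_gf X)) n"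
  proof (cases n)
    case 0
    then show ?thesis by (simp add: forest_gf_def forests_of_size_0)
  next
    case (Suc n')
    have "card (forests_of_size X (Suc n')) =
          (\<Sum>k\<le>n'. card (trees_of_size X k) * card (forests_of_size X (n' - k)))"
      using sum_forests_of_size_Suc[of n' X "\<lambda>_. 1 :: nat"] assms by simp
    moreover have "fps_nth (tree_gf X * forest_gf X) n' =
        (\<Sum>k\<le>n'. of_nat (card (trees_of_size X k)) * of_nat (card (forests_of_size X (n' - k))))"
      by (simp add: fps_mult_nth atLeast0AtMost tree_gf_def forest_gf_def)
    ultimately show ?thesis
      using Suc by (simp add: forest_gf_def)
  qed
qed

lemma forest_length_gf_eq:
  assumes "\<And>k. finite (trees_of_size X k)"
  shows "forest_length_gf X = fps_X * (tree_gf X * (forest_gf X + forest_length_gf X))"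
proof (rule fps_ext)
  fix n
  show "fps_nth (forest_length_gf X) n =
        fps_nth (fps_X * (tree_gf X * (forest_gf X + forest_length_gf X))) n"
  proof (cases n)
    case 0
    then show ?thesis by (simp add: forest_length_gf_def forests_of_size_0)
  next
    case (Suc n')
    have "(\<Sum>ts\<in>forests_of_size X (Suc n'). length ts) =
          (\<Sum>k\<le>n'. card (trees_of_size X k) *
             (card (forests_of_size X (n' - k)) + (\<Sum>ts\<in>forests_of_size X (n' - k). length ts)))"
      using sum_forests_of_size_Suc[of n' X length] assms by (simp add: sum_Suc add.commute)
    then have "(of_nat (\<Sum>ts\<in>forests_of_size X (Suc n'). length ts) :: complex) =
        of_nat (\<Sum>k\<le>n'. card (trees_of_size X k) *
             (card (forests_of_size X (n' - k)) + (\<Sum>ts\<in>forests_of_size X (n' - k). length ts)))"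
      by (rule arg_cong)
    moreover have "fps_nth (tree_gf X * (forest_gf X + forest_length_gf X)) n' =
        (\<Sum>k\<le>n'. of_nat (card (trees_of_size X k)) *
           (of_nat (card (forests_of_size X (n' - k))) +
            of_nat (\<Sum>ts\<in>forests_of_size X (n' - k). length ts)))"
      by (simp add: fps_mult_nth atLeast0AtMost tree_gf_def forest_gf_def forest_length_gf_def)
    ultimately show ?thesis
      using Suc by (simp add: forest_length_gf_def)
  qed
qed

section \<open>Labelled trees and trees avoiding a subtree\<close>

definition labelled_trees :: "nat \<Rightarrow> utree set" where
  "labelled_trees m = {t. labelled_in m t}"

definition avoiding :: "nat \<Rightarrow> utree \<Rightarrow> utree set" where
  "avoiding m s = {t. labelled_in m t \<and> s \<notin> subtrees t}"

definition nodes_over :: "nat \<Rightarrow> utree set \<Rightarrow> nat \<Rightarrow> utree set" where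
  "nodes_over m X n = (\<lambda>(a, ts). Node a ts) ` ({1..m} \<times> forests_of_size X n)"

lemma card_nodes_over: "card (nodes_over m X n) = m * card (forests_of_size X n)"
proof -
  have "inj_on (\<lambda>(a, ts). Node a ts) ({1..m} \<times> forests_of_size X n)"
    by (auto simp: inj_on_def)
  then show ?thesis
    by (simp add: nodes_over_def card_image card_cartesian_product)
qed

lemma trees_eq_nodes_over: "trees m n = nodes_over m (labelled_trees m) n"
proof (intro equalityI subsetI)
  fix t assume "t \<in> trees m n"
  then obtain a ts where "t = Node a ts" "labelled_in m (Node a ts)" "tsize (Node a ts) = n"
    by (cases t) (auto simp: trees_def)
  then show "t \<in> nodes_over m (labelled_trees m) n"
    by (auto simp: nodes_over_def forests_of_size_def labelled_trees_def forest_size_def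
        intro!: image_eqI[of _ _ "(a, ts)"])
qed (auto simp: nodes_over_def trees_def forests_of_size_def labelled_trees_def forest_size_def)

lemma trees_of_size_labelled_trees: "trees_of_size (labelled_trees m) n = trees m n"
  by (auto simp: trees_of_size_def labelled_trees_def trees_def)

lemma finite_trees: "finite (trees m n)"
proof (induction n rule: less_induct)
  case (less n)
  show ?case
    unfolding trees_eq_nodes_over nodes_over_def
    by (intro finite_imageI finite_cartesian_product finite_forests_of_size)
       (auto simp: trees_of_size_labelled_trees less)
qed

lemma tsize_child_less: "c \<in> set ts \<Longrightarrow> tsize c < tsize (Node a ts)"
  by (induction ts) (auto simp: tsize_Node)

lemma tsize_subtree_le: "s \<in> subtrees t \<Longrightarrow> tsize s \<le> tsize t"
proof (induction t)
  case (Node a ts)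
  then show ?case
    using tsize_child_less[of _ ts a] by fastforce
qed

lemma labelled_in_subtree: "labelled_in m t \<Longrightarrow> s \<in> subtrees t \<Longrightarrow> labelled_in m s"
  by (induction t) auto

lemma trees_of_size_avoiding_subset: "trees_of_size (avoiding m s) n \<subseteq> trees m n"
  by (auto simp: trees_of_size_def avoiding_def trees_def)

lemma finite_trees_of_size_avoiding: "finite (trees_of_size (avoiding m s) n)"
  using finite_subset[OF trees_of_size_avoiding_subset finite_trees] .

lemma trees_of_size_avoiding:
  "trees_of_size (avoiding m s) n = nodes_over m (avoiding m s) n - {s}"
proof (intro equalityI subsetI)
  fix t assume "t \<in> trees_of_size (avoiding m s) n"
  then obtain a ts where "t = Node a ts" "labelled_in m (Node a ts)" "tsize (Node a ts) = n"
     "s \<notin> subtrees (Node a ts)"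
    by (cases t) (auto simp: trees_of_size_def avoiding_def)
  then show "t \<in> nodes_over m (avoiding m s) n - {s}"
    by (auto simp: nodes_over_def forests_of_size_def avoiding_def forest_size_def
        intro!: image_eqI[of _ _ "(a, ts)"])
qed (auto simp: trees_of_size_def nodes_over_def forests_of_size_def avoiding_def forest_size_def)

lemma in_nodes_over_avoiding:
  assumes "labelled_in m s"
  shows "s \<in> nodes_over m (avoiding m s) (tsize s)"
proof -
  obtain a ts where s: "s = Node a ts" by (cases s)
  have "c \<in> avoiding m s" if "c \<in> set ts" for c
  proof -
    have "s \<notin> subtrees c"
      using tsize_child_less[OF that, of a] tsize_subtree_le s by force
    then show ?thesis using assms s that by (auto simp: avoiding_def)
  qed
  then show ?thesis using assms s
    by (auto simp: nodes_over_def forests_of_size_def forest_size_def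
        intro!: image_eqI[of _ _ "(a, ts)"])
qed

lemma card_trees_of_size_avoiding:
  assumes "labelled_in m s"
  shows "card (trees_of_size (avoiding m s) n) + (if n = tsize s then 1 else 0) =
         m * card (forests_of_size (avoiding m s) n)"
proof -
  have fin: "finite (nodes_over m (avoiding m s) n)"
    unfolding nodes_over_def
    by (intro finite_imageI finite_cartesian_product finite_forests_of_size finite_trees_of_size_avoiding)
       simp
  have "s \<in> nodes_over m (avoiding m s) n \<longleftrightarrow> n = tsize s"
    using in_nodes_over_avoiding[OF assms]
    by (auto simp: nodes_over_def forests_of_size_def forest_size_def)
  then show ?thesis
    unfolding trees_of_size_avoiding card_nodes_over[symmetric]
    using fin card_Suc_Diff1[OF fin, of s] by auto
qed

lemma avoiding_subset_labelled_trees: "avoiding m s \<subseteq> labelled_trees m"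
  by (auto simp: avoiding_def labelled_trees_def)

lemma tree_gf_labelled_trees:
  "tree_gf (labelled_trees m) = fps_const (of_nat m) * forest_gf (labelled_trees m)"
  by (rule fps_ext)
     (simp add: tree_gf_def forest_gf_def trees_of_size_labelled_trees trees_eq_nodes_over card_nodes_over)

lemma tree_gf_avoiding:
  assumes "labelled_in m s"
  shows "tree_gf (avoiding m s) + fps_X ^ tsize s = fps_const (of_nat m) * forest_gf (avoiding m s)"
proof (rule fps_ext)
  fix n
  have "(of_nat (card (trees_of_size (avoiding m s) n) + (if n = tsize s then 1 else 0)) :: complex) =
        of_nat (m * card (forests_of_size (avoiding m s) n))"
    by (simp only: card_trees_of_size_avoiding[OF assms])
  then show "fps_nth (tree_gf (avoiding m s) + fps_X ^ tsize s) n =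
             fps_nth (fps_const (of_nat m) * forest_gf (avoiding m s)) n"
    by (auto simp: tree_gf_def forest_gf_def split: if_splits)
qed

lemma labelled_trees_square_root:
  "(1 - 2 * fps_X * tree_gf (labelled_trees m))\<^sup>2 = 1 - fps_const (4 * of_nat m) * fps_X"
proof -
  have "(1 - fps_X * 0 - 2 * fps_X * tree_gf (labelled_trees m))\<^sup>2 =
        1 - 4 * fps_const (of_nat m) * fps_X + 2 * fps_X * 0 + (fps_X * 0)\<^sup>2"
    by (rule square_root_of_tree_equation[OF forest_gf_eq])
       (simp_all add: tree_gf_labelled_trees trees_of_size_labelled_trees finite_trees)
  then show ?thesis by (simp add: fps_numeral_fps_const)
qed

lemma avoiding_square_root:
  assumes "labelled_in m s"
  shows "(1 - fps_X ^ (tsize s + 1) - 2 * fps_X * tree_gf (avoiding m s))\<^sup>2 =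
         1 - fps_const (4 * of_nat m) * fps_X + 2 * fps_X ^ (tsize s + 1) + fps_X ^ (2 * tsize s + 2)"
proof -
  have "(1 - fps_X * fps_X ^ tsize s - 2 * fps_X * tree_gf (avoiding m s))\<^sup>2 =
        1 - 4 * fps_const (of_nat m) * fps_X + 2 * fps_X * fps_X ^ tsize s + (fps_X * fps_X ^ tsize s)\<^sup>2"
    by (rule square_root_of_tree_equation[OF forest_gf_eq tree_gf_avoiding[OF assms]])
       (simp add: finite_trees_of_size_avoiding)
  moreover have "(fps_X * fps_X ^ tsize s)\<^sup>2 = (fps_X ^ (2 * tsize s + 2) :: complex fps)"
    by (simp flip: power_mult power_Suc add: mult.commute)
  ultimately show ?thesis by (simp add: mult.assoc fps_numeral_fps_const)
qed

section \<open>Counting trees and their children\<close>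

lemma Tmp_Suc: "of_nat (n + 2) * Tmp m (Suc n) = 2 * of_nat m * (2 * of_nat n + 1) * Tmp m n"
proof -
  define C where "C = (2 * n) choose n"
  define C' where "C' = (2 * Suc n) choose Suc n"
  have "real (Suc n * C') = real (2 * (2 * n + 1) * C)"
    unfolding C_def C'_def central_binomial_Suc ..
  then have C': "real C' = 2 * (2 * real n + 1) * real C / (real n + 1)"
    by (simp add: field_simps)
  have "real (n + 2) * (1 / real (Suc n + 1) * real C' * real m ^ (Suc n + 1)) =
        real C' * real m ^ (n + 2)"
    by simp
  also have "\<dots> = 2 * real m * (2 * real n + 1) * (1 / real (n + 1) * real C * real m ^ (n + 1))"
    unfolding C' by (simp add: field_simps power_Suc)
  finally have "real (n + 2) * (1 / real (Suc n + 1) * real C' * real m ^ (Suc n + 1)) =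
        2 * real m * (2 * real n + 1) * (1 / real (n + 1) * real C * real m ^ (n + 1))" .
  then have "complex_of_real (real (n + 2) * (1 / real (Suc n + 1) * real C' * real m ^ (Suc n + 1)))
      = complex_of_real (2 * real m * (2 * real n + 1) * (1 / real (n + 1) * real C * real m ^ (n + 1)))"
    by (rule arg_cong)
  then show ?thesis
    unfolding Tmp_def C_def[symmetric] C'_def[symmetric]
    by (simp only: of_real_mult of_real_of_nat_eq of_real_add of_real_numeral of_real_1)
qed

lemma card_trees_Suc:
  "of_nat (n + 2) * of_nat (card (trees m (Suc n))) =
   2 * of_nat m * (2 * of_nat n + 1) * (of_nat (card (trees m n)) :: complex)"
proof -
  have nth: "fps_nth (1 - 2 * fps_X * tree_gf (labelled_trees m)) (Suc k) =
             - 2 * of_nat (card (trees m k))" for k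
    by (simp add: tree_gf_def trees_of_size_labelled_trees numeral_fps_const mult.assoc)
  have "- 4 * (of_nat (n + 2) * of_nat (card (trees m (Suc n)))) =
        - 4 * (2 * of_nat m * (2 * of_nat n + 1) * (of_nat (card (trees m n)) :: complex))"
    using fps_square_linear_coeff_recurrence[OF labelled_trees_square_root[of m], of "Suc n"]
    unfolding nth by (simp add: algebra_simps)
  then show ?thesis by simp
qed

lemma card_trees_0: "card (trees m 0) = m"
  by (simp add: trees_eq_nodes_over card_nodes_over forests_of_size_0)

lemma card_trees_eq_Tmp: "of_nat (card (trees m n)) = Tmp m n"
proof (induction n)
  case 0
  then show ?case by (simp add: card_trees_0 Tmp_def)
next
  case (Suc n)
  have "of_nat (n + 2) * of_nat (card (trees m (Suc n))) = (of_nat (n + 2) * Tmp m (Suc n) :: complex)"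
    unfolding card_trees_Suc Tmp_Suc Suc.IH ..
  moreover have "of_nat (n + 2) \<noteq> (0 :: complex)"
    by (simp only: of_nat_eq_0_iff)
  ultimately show ?case by (metis mult_left_cancel)
qed

lemma sum_num_children_trees:
  "(\<Sum>s\<in>trees m p. num_children s) = m * (\<Sum>ts\<in>forests_of_size (labelled_trees m) p. length ts)"
proof -
  have "inj_on (\<lambda>(a, ts). Node a ts) ({1..m} \<times> forests_of_size (labelled_trees m) p)"
    by (auto simp: inj_on_def)
  then have "(\<Sum>s\<in>trees m p. num_children s) =
             (\<Sum>(a, ts)\<in>{1..m} \<times> forests_of_size (labelled_trees m) p. length ts)"
    unfolding trees_eq_nodes_over nodes_over_def by (simp add: sum.reindex case_prod_unfold)
  then show ?thesis
    by (simp add: sum.cartesian_product[symmetric])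
qed

lemma sum_num_children_trees_eq_Tmp:
  assumes "m \<ge> 1"
  shows "of_nat (\<Sum>s\<in>trees m p. num_children s) = 3 * of_nat p * Tmp m p / of_nat (p + 2)"
proof -
  define W :: complex where "W = of_nat (\<Sum>s\<in>trees m p. num_children s)"
  have fin: "finite (trees_of_size (labelled_trees m) k)" for k
    by (simp add: trees_of_size_labelled_trees finite_trees)
  have "fps_X * (fps_const (of_nat m) * (fps_const (of_nat m) * forest_length_gf (labelled_trees m))) =
        tree_gf (labelled_trees m) - fps_const (of_nat m) -
        fps_X * (fps_const (of_nat m) * tree_gf (labelled_trees m))"
    by (rule forest_length_identity[OF tree_gf_labelled_trees forest_gf_eq[OF fin]
          forest_length_gf_eq[OF fin]])
  from arg_cong[OF this, of "\<lambda>f. fps_nth f (Suc p)"]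
  have "of_nat m * W = Tmp m (Suc p) - of_nat m * Tmp m p"
    by (simp add: W_def sum_num_children_trees forest_length_gf_def tree_gf_def
        trees_of_size_labelled_trees card_trees_eq_Tmp)
  then have "of_nat m * (of_nat (p + 2) * W) =
             of_nat (p + 2) * Tmp m (Suc p) - of_nat (p + 2) * (of_nat m * Tmp m p)"
    by (metis mult.left_commute right_diff_distrib)
  also have "\<dots> = of_nat m * (3 * of_nat p * Tmp m p)"
    unfolding Tmp_Suc by (simp add: algebra_simps)
  finally have "of_nat m * (of_nat (p + 2) * W) = of_nat m * (3 * of_nat p * Tmp m p)" .
  moreover have "of_nat m \<noteq> (0 :: complex)" "of_nat (p + 2) \<noteq> (0 :: complex)"
    using assms by (simp_all only: of_nat_eq_0_iff)
  ultimately have "W * of_nat (p + 2) = 3 * of_nat p * Tmp m p"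
    by (metis mult_left_cancel mult.commute)
  then show ?thesis
    unfolding W_def[symmetric] using \<open>of_nat (p + 2) \<noteq> 0\<close> by (simp add: eq_divide_eq)
qed

lemma card_trees_le: "real (card (trees m n)) \<le> real m * (4 * real m) ^ n"
proof -
  have "complex_of_real (real (card (trees m n))) =
        complex_of_real (1 / real (n + 1) * real ((2 * n) choose n) * real m ^ (n + 1))"
    using card_trees_eq_Tmp[of m n] unfolding Tmp_def by simp
  then have "real (card (trees m n)) = 1 / real (n + 1) * real ((2 * n) choose n) * real m ^ (n + 1)"
    by (simp only: of_real_eq_iff)
  also have "\<dots> \<le> real ((2 * n) choose n) * real m ^ (n + 1)"
    by (simp add: field_simps mult_left_mono)
  also have "\<dots> \<le> 2 ^ (2 * n) * real m ^ (n + 1)"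
    using binomial_le_pow2[of "2 * n" n] by (intro mult_right_mono) (simp_all flip: of_nat_le_iff)
  also have "\<dots> = real m * (4 * real m) ^ n"
    by (simp add: power_mult power_mult_distrib)
  finally show ?thesis .
qed

section \<open>Convergence\<close>

lemma norm_tree_gf_nth_le:
  assumes "X \<subseteq> labelled_trees m"
  shows "norm (fps_nth (tree_gf X) n) \<le> real m * (4 * real m) ^ n"
proof -
  have "trees_of_size X n \<subseteq> trees m n"
    using assms by (auto simp: trees_of_size_def labelled_trees_def trees_def)
  then have "card (trees_of_size X n) \<le> card (trees m n)"
    by (rule card_mono[OF finite_trees])
  then show ?thesis
    using card_trees_le[of m n] by (simp add: tree_gf_def)
qed

lemma tree_gf_eval_small:
  assumes "X \<subseteq> labelled_trees m" "m \<ge> 1" "norm z < 1 / (16 * real m)"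
  shows "norm z < fps_conv_radius (tree_gf X)"
    and "norm (2 * z * eval_fps (tree_gf X) z) \<le> 1 / 6"
proof -
  have mz: "4 * real m * norm z < 1 / 4"
    using assms(2,3) by (simp add: field_simps)
  then show "norm z < fps_conv_radius (tree_gf X)"
    by (intro norm_less_fps_conv_radius_geometric[OF norm_tree_gf_nth_le[OF assms(1)]]) simp_all
  have "norm (eval_fps (tree_gf X) z) \<le> real m / (1 - 4 * real m * norm z)"
    using mz by (intro norm_eval_fps_le_geometric[OF norm_tree_gf_nth_le[OF assms(1)]]) simp_all
  also have "\<dots> \<le> real m / (3 / 4)"
    using mz by (intro divide_left_mono) simp_all
  finally have eval_le: "norm (eval_fps (tree_gf X) z) \<le> real m / (3 / 4)" .
  have "norm (2 * z * eval_fps (tree_gf X) z) = 2 * norm z * norm (eval_fps (tree_gf X) z)"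
    by (simp add: norm_mult)
  also have "\<dots> \<le> 2 * norm z * (real m / (3 / 4))"
    using eval_le by (intro mult_left_mono) simp_all
  also have "\<dots> \<le> 1 / 6"
    using mz by (simp add: field_simps)
  finally show "norm (2 * z * eval_fps (tree_gf X) z) \<le> 1 / 6" .
qed

lemma card_containing_eq:
  "card {t \<in> trees m n. s \<in> subtrees t} = card (trees m n) - card (trees_of_size (avoiding m s) n)"
proof -
  have "{t \<in> trees m n. s \<in> subtrees t} = trees m n - trees_of_size (avoiding m s) n"
    by (auto simp: trees_def trees_of_size_def avoiding_def)
  then show ?thesis
    by (simp add: card_Diff_subset finite_trees_of_size_avoiding trees_of_size_avoiding_subset)
qed

lemma csqrt_labelled_trees:
  assumes "m \<ge> 1" "norm z < 1 / (16 * real m)"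
  shows "csqrt (1 - 4 * of_nat m * z) = 1 - 2 * z * eval_fps (tree_gf (labelled_trees m)) z"
proof (rule csqrt_eqI)
  note small = tree_gf_eval_small[OF order.refl assms]
  have "eval_fps ((1 - 2 * fps_X * tree_gf (labelled_trees m))\<^sup>2) z =
        eval_fps (1 - fps_const (4 * of_nat m) * fps_X) z"
    unfolding labelled_trees_square_root ..
  then show "(1 - 2 * z * eval_fps (tree_gf (labelled_trees m)) z)\<^sup>2 = 1 - 4 * of_nat m * z"
    using small(1) by (simp add: eval_fps_arith norm_less_fps_conv_radius_arith)
  show "norm (1 - (1 - 2 * z * eval_fps (tree_gf (labelled_trees m)) z)) < 1"
    using small(2) by simp
qed

lemma csqrt_avoiding:
  assumes "m \<ge> 1" "labelled_in m s" "norm z < 1 / (16 * real m)"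
  shows "csqrt (1 - 4 * of_nat m * z + 2 * z ^ (tsize s + 1) + z ^ (2 * tsize s + 2)) =
         1 - z ^ (tsize s + 1) - 2 * z * eval_fps (tree_gf (avoiding m s)) z"
    (is "csqrt ?u = 1 - ?zp - 2 * z * ?a")
proof (rule csqrt_eqI)
  note small = tree_gf_eval_small[OF avoiding_subset_labelled_trees[of m s] assms(1,3)]
  have "eval_fps ((1 - fps_X ^ (tsize s + 1) - 2 * fps_X * tree_gf (avoiding m s))\<^sup>2) z =
        eval_fps (1 - fps_const (4 * of_nat m) * fps_X + 2 * fps_X ^ (tsize s + 1) +
          fps_X ^ (2 * tsize s + 2)) z"
    unfolding avoiding_square_root[OF assms(2)] ..
  then show "(1 - ?zp - 2 * z * ?a)\<^sup>2 = ?u"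
    using small(1) by (simp add: eval_fps_arith norm_less_fps_conv_radius_arith)
  have "norm z \<le> real m * norm z"
    using assms(1) mult_right_mono[of 1 "real m" "norm z"] by simp
  then have "norm z < 1 / 16"
    using assms(1,3) by (simp add: field_simps)
  moreover have "norm ?zp \<le> norm z ^ 1"
    unfolding norm_power using \<open>norm z < 1 / 16\<close> by (intro power_decreasing) simp_all
  ultimately have "norm (?zp + 2 * z * ?a) < 1"
    using norm_triangle_ineq[of ?zp "2 * z * ?a"] small(2)
    unfolding power_one_right by linarith
  then show "norm (1 - (1 - ?zp - 2 * z * ?a)) < 1"
    by (simp add: algebra_simps)
qed

lemma containing_trees_series:
  assumes "m \<ge> 1" "labelled_in m s" "z \<noteq> 0" "norm z < 1 / (16 * real m)"
  shows "(\<lambda>n. of_nat (card {t \<in> trees m n. s \<in> subtrees t}) * z ^ n) sums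
           (bracket m (tsize s) z / (2 * z))"
proof -
  define T where "T = tree_gf (labelled_trees m)"
  define A where "A = tree_gf (avoiding m s)"
  have radius: "norm z < fps_conv_radius T" "norm z < fps_conv_radius A"
    unfolding T_def A_def using tree_gf_eval_small(1) avoiding_subset_labelled_trees assms(1,4)
    by blast+
  have "bracket m (tsize s) z = 2 * z * (eval_fps T z - eval_fps A z)"
    unfolding bracket_def T_def A_def csqrt_labelled_trees[OF assms(1,4)]
      csqrt_avoiding[OF assms(1,2,4)]
    by (simp add: algebra_simps)
  then have "bracket m (tsize s) z / (2 * z) = eval_fps (T - A) z"
    using assms(3) radius by (simp add: eval_fps_diff)
  moreover have "fps_nth (T - A) n = of_nat (card {t \<in> trees m n. s \<in> subtrees t})" for n
    using card_mono[OF finite_trees trees_of_size_avoiding_subset, of m s n]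
    by (simp add: T_def A_def tree_gf_def trees_of_size_labelled_trees card_containing_eq of_nat_diff)
  ultimately show ?thesis
    using sums_eval_fps[of z "T - A"] radius by (simp add: norm_less_fps_conv_radius_diff)
qed

section \<open>Summing over distinct subtrees\<close>

lemma sum_subtrees_swap:
  "(\<Sum>t\<in>trees m n. \<Sum>s\<in>subtrees t. f s) =
   (\<Sum>p\<le>n. \<Sum>s\<in>trees m p. f s * card {t \<in> trees m n. s \<in> subtrees t})"
proof -
  define U where "U = (\<Union>p\<le>n. trees m p)"
  have "finite U"
    by (simp add: U_def finite_trees)
  have "subtrees t = {s \<in> U. s \<in> subtrees t}" if "t \<in> trees m n" for t
    using that tsize_subtree_le labelled_in_subtree by (fastforce simp: U_def trees_def)
  then have "(\<Sum>t\<in>trees m n. \<Sum>s\<in>subtrees t. f s) =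
             (\<Sum>t\<in>trees m n. \<Sum>s\<in>{s \<in> U. s \<in> subtrees t}. f s)"
    by (intro sum.cong) auto
  also have "\<dots> = (\<Sum>s\<in>U. \<Sum>t\<in>{t \<in> trees m n. s \<in> subtrees t}. f s)"
    by (rule sum.swap_restrict[OF finite_trees \<open>finite U\<close>])
  also have "\<dots> = (\<Sum>p\<le>n. \<Sum>s\<in>trees m p. f s * card {t \<in> trees m n. s \<in> subtrees t})"
  proof -
    have "trees m i \<inter> trees m j = {}" if "i \<noteq> j" for i j
      using that by (auto simp: trees_def)
    then show ?thesis
      unfolding U_def by (subst sum.UNION_disjoint) (auto simp: finite_trees mult.commute)
  qed
  finally show ?thesis .
qed

lemma card_subtrees_le: "card (subtrees t) \<le> Suc (tsize t)"
proof (induction t)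
  case (Node a ts)
  have "card (subtrees (Node a ts)) \<le> Suc (card (\<Union>t\<in>set ts. subtrees t))"
    by (simp add: card_insert_le_m1 card_insert_if)
  also have "card (\<Union>t\<in>set ts. subtrees t) \<le> (\<Sum>t\<in>set ts. card (subtrees t))"
    by (rule card_UN_le) simp
  also have "\<dots> \<le> (\<Sum>t\<in>set ts. Suc (tsize t))"
    by (intro sum_mono) (use Node in auto)
  also have "\<dots> \<le> (\<Sum>t\<leftarrow>ts. Suc (tsize t))"
    by (rule sum_set_le_sum_list)
  finally show ?case
    by (simp add: sum_list_Suc)
qed

lemma sum_subtrees_le:
  assumes "\<And>s. f s \<le> Suc (tsize s)"
  shows "(\<Sum>t\<in>trees m n. \<Sum>s\<in>subtrees t. f s) \<le> (Suc n)\<^sup>2 * card (trees m n)"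
proof -
  have "(\<Sum>s\<in>subtrees t. f s) \<le> Suc n * Suc n" if "t \<in> trees m n" for t
  proof -
    have "(\<Sum>s\<in>subtrees t. f s) \<le> (\<Sum>s\<in>subtrees t. Suc n)"
      using that assms tsize_subtree_le by (intro sum_mono) (fastforce simp: trees_def intro: order.trans)
    also have "\<dots> \<le> Suc n * Suc n"
      using mult_right_mono[OF card_subtrees_le[of t], of "Suc n"] that by (simp add: trees_def)
    finally show ?thesis .
  qed
  then have "(\<Sum>t\<in>trees m n. \<Sum>s\<in>subtrees t. f s) \<le> of_nat (card (trees m n)) * (Suc n * Suc n)"
    by (rule sum_bounded_above)
  then show ?thesis
    by (simp add: power2_eq_square mult.commute)
qed

lemma summable_sum_subtrees:
  assumes "m \<ge> 1" "norm z < 1 / (16 * real m)" "\<And>s. f s \<le> Suc (tsize s)"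
  shows "summable (\<lambda>n. real (\<Sum>t\<in>trees m n. \<Sum>s\<in>subtrees t. f s) * norm z ^ n)"
proof (rule summable_comparison_test')
  have "16 * real m * norm z < 1"
    using assms(1,2) by (simp add: field_simps)
  then show "summable (\<lambda>n. real m * (16 * real m * norm z) ^ n)"
    by (intro summable_mult summable_geometric) simp
next
  fix n
  have "real (\<Sum>t\<in>trees m n. \<Sum>s\<in>subtrees t. f s) \<le> real ((Suc n)\<^sup>2 * card (trees m n))"
    using sum_subtrees_le[OF assms(3), of m n] by (simp only: of_nat_le_iff)
  also have "\<dots> = real ((Suc n)\<^sup>2) * real (card (trees m n))"
    by (rule of_nat_mult)
  also have "\<dots> \<le> 4 ^ n * (real m * (4 * real m) ^ n)"
  proof (rule mult_mono)
    show "real ((Suc n)\<^sup>2) \<le> 4 ^ n"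
      using Suc_square_le_four_power[of n] by (metis of_nat_le_iff of_nat_numeral of_nat_power)
  qed (use card_trees_le[of m n] in \<open>simp_all add: power_mult_distrib\<close>)
  finally have "real (\<Sum>t\<in>trees m n. \<Sum>s\<in>subtrees t. f s) * norm z ^ n \<le>
                4 ^ n * (real m * (4 * real m) ^ n) * norm z ^ n"
    by (simp add: mult_right_mono)
  also have "\<dots> = real m * (16 * real m * norm z) ^ n"
    by (simp add: power_mult_distrib mult_ac flip: power_mult_distrib[of 4 4])
  finally show "norm (real (\<Sum>t\<in>trees m n. \<Sum>s\<in>subtrees t. f s) * norm z ^ n) \<le>
             real m * (16 * real m * norm z) ^ n"
    by (simp add: abs_mult del: of_nat_sum)
qed

lemma subtree_row_series:
  fixes f :: "utree \<Rightarrow> nat"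
  assumes "m \<ge> 1" "z \<noteq> 0" "norm z < 1 / (16 * real m)"
  shows "(\<lambda>n. of_nat (\<Sum>s\<in>trees m p. f s * card {t \<in> trees m n. s \<in> subtrees t}) * z ^ n)
           sums (of_nat (\<Sum>s\<in>trees m p. f s) * (bracket m p z / (2 * z)))"
proof -
  have "(\<lambda>n. \<Sum>s\<in>trees m p. of_nat (f s) *
           (of_nat (card {t \<in> trees m n. s \<in> subtrees t}) * z ^ n))
          sums (\<Sum>s\<in>trees m p. of_nat (f s) * (bracket m p z / (2 * z)))"
  proof (rule sums_sum)
    fix s assume "s \<in> trees m p"
    then have s: "labelled_in m s" "tsize s = p"
      by (auto simp: trees_def)
    show "(\<lambda>n. of_nat (f s) * (of_nat (card {t \<in> trees m n. s \<in> subtrees t}) * z ^ n))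
            sums (of_nat (f s) * (bracket m p z / (2 * z)))"
      using containing_trees_series[OF assms(1) s(1) assms(2,3)] s(2) by (intro sums_mult) simp
  qed
  then show ?thesis
    by (simp add: sum_distrib_right sum_divide_distrib mult.assoc)
qed

lemma subtree_weight_series:
  fixes f :: "utree \<Rightarrow> nat"
  assumes "m \<ge> 1" "z \<noteq> 0" "norm z < 1 / (16 * real m)" "\<And>s. f s \<le> Suc (tsize s)"
  shows "\<exists>S. (\<lambda>n. of_nat (\<Sum>t\<in>trees m n. \<Sum>s\<in>subtrees t. f s) * z ^ n) sums S \<and>
             (\<lambda>p. of_nat (\<Sum>s\<in>trees m p. f s) * (bracket m p z / (2 * z))) sums S"
proof -
  define a where
    "a p n = of_nat (\<Sum>s\<in>trees m p. f s * card {t \<in> trees m n. s \<in> subtrees t}) * z ^ n" for p n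
  have diagonal: "(\<Sum>p\<le>n. a p n) = of_nat (\<Sum>t\<in>trees m n. \<Sum>s\<in>subtrees t. f s) * z ^ n" for n
    unfolding a_def sum_subtrees_swap of_nat_sum sum_distrib_right ..
  have "\<exists>S. (\<lambda>n. \<Sum>p\<le>n. a p n) sums S \<and>
            (\<lambda>p. of_nat (\<Sum>s\<in>trees m p. f s) * (bracket m p z / (2 * z))) sums S"
  proof (rule sums_triangular_array)
    show "a p n = 0" if "n < p" for p n
    proof -
      have "card {t \<in> trees m n. s \<in> subtrees t} = 0" if "s \<in> trees m p" for s
      proof -
        have "{t \<in> trees m n. s \<in> subtrees t} = {}"
          using that \<open>n < p\<close> tsize_subtree_le by (fastforce simp: trees_def)
        then show ?thesis
          by (simp only: card.empty)
      qed
      then have "(\<Sum>s\<in>trees m p. f s * card {t \<in> trees m n. s \<in> subtrees t}) = 0"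
        by (intro sum.neutral ballI) simp
      then show ?thesis
        by (simp add: a_def)
    qed
    have "(\<Sum>p\<le>n. norm (a p n)) = real (\<Sum>t\<in>trees m n. \<Sum>s\<in>subtrees t. f s) * norm z ^ n" for n
      unfolding a_def sum_subtrees_swap norm_mult norm_of_nat norm_power
      by (simp add: sum_distrib_right)
    then show "summable (\<lambda>n. \<Sum>p\<le>n. norm (a p n))"
      using summable_sum_subtrees[OF assms(1,3,4)] by simp
    show "(\<lambda>n. a p n) sums (of_nat (\<Sum>s\<in>trees m p. f s) * (bracket m p z / (2 * z)))" for p
      unfolding a_def by (rule subtree_row_series[OF assms(1-3)])
  qed
  then show ?thesis
    unfolding diagonal .
qed

lemma dag_nodes_series:
  assumes "m \<ge> 1" "z \<noteq> 0" "norm z < 1 / (16 * real m)"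
  shows "\<exists>S. (\<lambda>p. Tmp m p * bracket m p z) sums S \<and>
             (\<lambda>n. of_nat (NT_coeff m n) * z ^ n) sums (1 / (2 * z) * S)"
proof -
  obtain S where nodes: "(\<lambda>n. of_nat (NT_coeff m n) * z ^ n) sums S"
    and weights: "(\<lambda>p. Tmp m p * (bracket m p z / (2 * z))) sums S"
    using subtree_weight_series[OF assms, of "\<lambda>_. 1"]
    by (auto simp: NT_coeff_def dag_nodes_def card_trees_eq_Tmp)
  have "(\<lambda>p. Tmp m p * bracket m p z) sums (2 * z * S)"
    using sums_mult[OF weights, of "2 * z"] assms(2) by (simp add: mult_ac)
  with nodes assms(2) show ?thesis
    by auto
qed

lemma num_children_le_tsize: "num_children s \<le> tsize s"
  by (cases s) simp

lemma dag_edges_series: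
  assumes "m \<ge> 1" "z \<noteq> 0" "norm z < 1 / (16 * real m)"
  shows "\<exists>S. (\<lambda>p. of_nat p * Tmp m p / of_nat (p + 2) * bracket m p z) sums S \<and>
             (\<lambda>n. of_nat (ET_coeff m n) * z ^ n) sums (3 / (2 * z) * S)"
proof -
  obtain S where edges: "(\<lambda>n. of_nat (ET_coeff m n) * z ^ n) sums S"
    and children: "(\<lambda>p. of_nat (\<Sum>s\<in>trees m p. num_children s) * (bracket m p z / (2 * z))) sums S"
    using subtree_weight_series[OF assms, of num_children] num_children_le_tsize[THEN le_SucI]
    unfolding ET_coeff_def dag_edges_def by blast
  have weights: "(\<lambda>p. 3 * of_nat p * Tmp m p / of_nat (p + 2) * (bracket m p z / (2 * z))) sums S"
    using children unfolding sum_num_children_trees_eq_Tmp[OF assms(1)] .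
  have "2 * z / 3 * (3 * x / d * (b / (2 * z))) = x / d * b" for x d b
    using assms(2) by (cases "d = 0") (simp_all add: field_simps)
  then have "(\<lambda>p. of_nat p * Tmp m p / of_nat (p + 2) * bracket m p z) sums (2 * z / 3 * S)"
    using sums_mult[OF weights, of "2 * z / 3"] by (simp add: mult.assoc)
  with edges assms(2) show ?thesis
    by auto
qed

theorem proposition1:
  fixes m :: nat
  assumes "m \<ge> 1"
  shows "\<exists>r>0. \<forall>z::complex. 0 < norm z \<and> norm z < r \<longrightarrow>
           (\<exists>S. (\<lambda>p. Tmp m p * bracket m p z) sums S \<and>
                (\<lambda>n. of_nat (NT_coeff m n) * z ^ n) sums (1 / (2 * z) * S)) \<and>
           (\<exists>S. (\<lambda>p. of_nat p * Tmp m p / of_nat (p + 2) * bracket m p z) sums S \<and>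
                (\<lambda>n. of_nat (ET_coeff m n) * z ^ n) sums (3 / (2 * z) * S))"
proof (intro exI[of _ "1 / (16 * real m)"] conjI allI impI)
  show "0 < 1 / (16 * real m)"
    using assms by simp
  fix z :: complex
  assume "0 < norm z \<and> norm z < 1 / (16 * real m)"
  then show "\<exists>S. (\<lambda>p. Tmp m p * bracket m p z) sums S \<and>
               (\<lambda>n. of_nat (NT_coeff m n) * z ^ n) sums (1 / (2 * z) * S)"
    and "\<exists>S. (\<lambda>p. of_nat p * Tmp m p / of_nat (p + 2) * bracket m p z) sums S \<and>
               (\<lambda>n. of_nat (ET_coeff m n) * z ^ n) sums (3 / (2 * z) * S)"
    using dag_nodes_series[OF assms] dag_edges_series[OF assms] by auto
qed

end
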